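(* Let $X\subseteq\mathbb{R}^n$ be nonempty, closed, convex and bounded; let $F:X\to\mathbb{R}^n$ be $L_F$-Lipschitz continuous and monotone on $X$; let $H:X\to\mathbb{R}^n$ be $L_H$-Lipschitz continuous and monotone on $X$; and assume $\mathrm{SOL}(\mathrm{SOL}(X,F),H)\neq\emptyset$. Given $\gamma>0$, positive scalars $\{\eta_k\}$ and $x_0\in X$, define for $k\ge0$: $y_{k+1}=\Pi_X[x_k-\gamma(F(x_k)+\eta_kH(x_k))]$, $x_{k+1}=\Pi_X[x_k-\gamma(F(y_{k+1})+\eta_kH(y_{k+1}))]$, and $\bar y_K=\frac1K\sum_{k=0}^{K-1}y_{k+1}$. Assume $\gamma^2(L_F^2+\eta_0^2L_H^2)\le0.5$. Case 1 (diminishing regularization): Let $\eta_k=\frac{\eta_0}{(k+1)^b}$ with arbitrary $b\in(0,1)$. Then for all $K\ge2^{1/(1-b)}$: (1-i) $-B_H\,\mathrm{dist}(\bar y_K,\mathrm{SOL}(X,F))\le\mathrm{Gap}(\bar y_K,\mathrm{SOL}(X,F),H)\le\frac{D_X^2}{\gamma\eta_0}\frac{1}{K^{1-b}}$; (1-ii) $0\le\mathrm{Gap}(\bar y_K,X,F)\le\frac{D_X^2}{\gamma}\frac1K+\frac{\sqrt2\,\eta_0C_HD_X}{1-b}\frac1{K^b}$; (1-iii) if moreover $\mathrm{VI}(X,F)$ is $\alpha$-weakly sharp of order $\mathcal{M}$, then $\mathrm{Gap}(\bar y_K,\mathrm{SOL}(X,F),H)\ge -B_H\sqrt[\mathcal{M}]{\alpha^{-1}\left(\frac{D_X^2}{\gamma}\frac1K+\frac{\sqrt2\,C_HD_X\eta_0}{1-b}\frac1{K^b}\right)}$.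 Case 2 (constant regularization): Suppose $\mathrm{VI}(X,F)$ is $\alpha$-weakly sharp of order $\mathcal{M}=1$, and let $\eta_k\equiv\eta$ (so $\eta_0=\eta$) with $\eta\le\frac{\alpha}{2\|H(x^* )\|}$, where $x^*$ is an arbitrary point of $\mathrm{SOL}(\mathrm{SOL}(X,F),H)$. Then for all $K\ge1$: (2-i) $\mathrm{dist}(\bar y_K,\mathrm{SOL}(X,F))\le\frac{\|x_0-x^*\|^2}{\gamma\alpha}\frac1K$; (2-ii) $|\mathrm{Gap}(\bar y_K,\mathrm{SOL}(X,F),H)|\le\max\left\{\frac{D_X^2}{\gamma\eta},\frac{B_H\|x_0-x^*\|^2}{\gamma\alpha}\right\}\frac1K$.
   Context: $\mathrm{SOL}(Y,G)=\{x\in Y: G(x)^\top(y-x)\ge0\ \forall y\in Y\}$. $\mathrm{Gap}(x,Y,G)=\sup_{y\in Y}G(y)^\top(x-y)$. $\Pi_X$ Euclidean projection, $\mathrm{dist}(x,Y)=\|x-\Pi_Y[x]\|$. $D_X^2=\sup_{x,y\in X}\frac12\|x-y\|^2$, $B_H=\sup_{x\in\mathrm{SOL}(X,F)}\|H(x)\|$, $C_H=\sup_{x\in X}\|H(x)\|$. $\mathrm{VI}(X,F)$ is $\alpha$-weakly sharp of order $\mathcal{M}$ if there are $\alpha>0$, $\mathcal{M}\ge1$ with $F(x^* )^\top(x-x^* )\ge\alpha\,\mathrm{dist}^{\mathcal{M}}(x,\mathrm{SOL}(X,F))$ for all $x\in X$, $x^*\in\mathrm{SOL}(X,F)$. *)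

theory Defs
  imports "HOL-Analysis.Analysis"
begin

definition SOL :: "'a::euclidean_space set \<Rightarrow> ('a \<Rightarrow> 'a) \<Rightarrow> 'a set" where
  "SOL Y G = {x \<in> Y. \<forall>y\<in>Y. G x \<bullet> (y - x) \<ge> 0}"

definition Gap :: "'a::euclidean_space \<Rightarrow> 'a set \<Rightarrow> ('a \<Rightarrow> 'a) \<Rightarrow> real" where
  "Gap x Y G = (SUP y\<in>Y. G y \<bullet> (x - y))"

definition proj :: "'a::euclidean_space set \<Rightarrow> 'a \<Rightarrow> 'a" where
  "proj X x = closest_point X x"

definition distset :: "'a::euclidean_space \<Rightarrow> 'a set \<Rightarrow> real" where
  "distset x Y = norm (x - proj Y x)"

definition DX2 :: "'a::euclidean_space set \<Rightarrow> real" where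
  "DX2 X = (SUP x\<in>X. SUP y\<in>X. (1/2) * (norm (x - y))^2)"

definition DX :: "'a::euclidean_space set \<Rightarrow> real" where
  "DX X = sqrt (DX2 X)"

definition BH :: "'a::euclidean_space set \<Rightarrow> ('a \<Rightarrow> 'a) \<Rightarrow> ('a \<Rightarrow> 'a) \<Rightarrow> real" where
  "BH X F H = (SUP x\<in>SOL X F. norm (H x))"

definition CH :: "'a::euclidean_space set \<Rightarrow> ('a \<Rightarrow> 'a) \<Rightarrow> real" where
  "CH X H = (SUP x\<in>X. norm (H x))"

definition monotone_op :: "'a::euclidean_space set \<Rightarrow> ('a \<Rightarrow> 'a) \<Rightarrow> bool" where
  "monotone_op X F \<longleftrightarrow> (\<forall>x\<in>X. \<forall>y\<in>X. (F x - F y) \<bullet> (x - y) \<ge> 0)"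

definition weakly_sharp :: "'a::euclidean_space set \<Rightarrow> ('a \<Rightarrow> 'a) \<Rightarrow> real \<Rightarrow> real \<Rightarrow> bool" where
  "weakly_sharp X F \<alpha> M \<longleftrightarrow> \<alpha> > 0 \<and> M \<ge> 1 \<and>
     (\<forall>x\<in>X. \<forall>xs\<in>SOL X F. F xs \<bullet> (x - xs) \<ge> \<alpha> * (distset x (SOL X F)) powr M)"

end

theory Submission
  imports Defs
begin

(* With G = F + eta_k H, each extragradient step satisfies the standard estimate
     gamma <G(y_{k+1}), y_{k+1} - u> <= |x_k - u|^2/2 - |x_{k+1} - u|^2/2   for u in X,
   because the step-size condition gives gamma (L_F + eta_k L_H) <= 1.
   For u in SOL(X,F) the F-part is nonnegative by monotonicity; dividing by eta_k and summing
   by parts against the increasing weights 1/eta_k bounds the H-gap of the average by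
   D_X^2/(gamma eta_{K-1} K). For u in X the H-part is at least -C_H sqrt 2 D_X, which bounds
   the F-gap. Cauchy-Schwarz at the projection onto SOL(X,F) gives the lower bound
   -B_H dist, and weak sharpness turns the F-gap into a bound on that distance.
   With constant eta and sharpness of order 1, the sharpness term absorbs the H-part, so the
   distances of the iterates y_{k+1} to SOL(X,F) are summable. *)

lemma proj_in: "closed X \<Longrightarrow> X \<noteq> {} \<Longrightarrow> proj X z \<in> X"
  unfolding proj_def by (rule closest_point_in_set)

lemma norm_proj_diff_le:
  fixes X :: "'a::euclidean_space set"
  assumes "convex X" "closed X" "u \<in> X"
  shows "(norm (proj X (z - v) - u))\<^sup>2
           \<le> (norm (z - u))\<^sup>2 - (norm (z - proj X (z - v)))\<^sup>2 + 2 * (v \<bullet> (u - proj X (z - v)))"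
proof -
  define p where "p = proj X (z - v)"
  have "(z - v - p) \<bullet> (u - p) \<le> 0"
    using closest_point_dot[OF assms] by (simp add: p_def proj_def)
  moreover have "(norm (p - u))\<^sup>2 = (norm (z - u))\<^sup>2 - (norm (z - p))\<^sup>2 + 2 * ((z - p) \<bullet> (u - p))"
    by (simp add: power2_norm_eq_inner inner_diff_left inner_diff_right inner_commute algebra_simps)
  ultimately show ?thesis
    unfolding p_def[symmetric] by (simp add: inner_diff_left)
qed

lemma extragradient_step:
  fixes X :: "'a::euclidean_space set" and G :: "'a \<Rightarrow> 'a"
  assumes X: "convex X" "closed X" and u: "u \<in> X"
    and w: "w = proj X (z - \<gamma> *\<^sub>R G z)" and z': "z' = proj X (z - \<gamma> *\<^sub>R G w)"
    and lip: "norm (G w - G z) \<le> L * norm (w - z)" and step: "\<gamma> * L \<le> 1"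
    and "0 \<le> L" "0 < \<gamma>"
  shows "\<gamma> * (G w \<bullet> (w - u)) \<le> (norm (z - u))\<^sup>2 / 2 - (norm (z' - u))\<^sup>2 / 2"
proof -
  \<comment> \<open>Add the projection inequalities at \<open>z'\<close> (tested with \<open>u\<close>) and at \<open>w\<close> (tested with \<open>z'\<close>);
    since \<open>\<gamma> * L \<le> 1\<close>, the cross term \<open>(G w - G z) \<bullet> (w - z')\<close> is absorbed by the squares.\<close>
  have "z' \<in> X" using z' proj_in X u by auto
  have at_z': "(norm (z' - u))\<^sup>2 \<le> (norm (z - u))\<^sup>2 - (norm (z - z'))\<^sup>2 + 2 * (\<gamma> * (G w \<bullet> (u - z')))"
    using norm_proj_diff_le[OF X u, of z "\<gamma> *\<^sub>R G w"] z' by simp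
  have at_w: "(norm (w - z'))\<^sup>2 \<le> (norm (z - z'))\<^sup>2 - (norm (z - w))\<^sup>2 + 2 * (\<gamma> * (G z \<bullet> (z' - w)))"
    using norm_proj_diff_le[OF X \<open>z' \<in> X\<close>, of z "\<gamma> *\<^sub>R G z"] w by simp
  have split: "\<gamma> * (G w \<bullet> (u - z')) + \<gamma> * (G z \<bullet> (z' - w))
      = - (\<gamma> * (G w \<bullet> (w - u))) + \<gamma> * ((G w - G z) \<bullet> (w - z'))"
    by (simp add: inner_diff_left inner_diff_right algebra_simps)
  have "(G w - G z) \<bullet> (w - z') \<le> L * norm (w - z) * norm (w - z')"
    using norm_cauchy_schwarz[of "G w - G z" "w - z'"] mult_right_mono[OF lip norm_ge_zero[of "w - z'"]]
    by linarith
  then have "\<gamma> * ((G w - G z) \<bullet> (w - z')) \<le> (\<gamma> * L) * norm (w - z) * norm (w - z')"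
    using \<open>0 < \<gamma>\<close> by (simp add: mult_left_mono mult.assoc)
  also have "\<dots> \<le> norm (w - z) * norm (w - z')"
    using mult_right_mono[OF step, of "norm (w - z) * norm (w - z')"] by (simp add: mult.assoc)
  also have "\<dots> \<le> ((norm (z - w))\<^sup>2 + (norm (w - z'))\<^sup>2) / 2"
    using sum_squares_bound[of "norm (w - z)" "norm (w - z')"] by (simp add: norm_minus_commute)
  finally show ?thesis
    using at_z' at_w split by argo
qed

lemma SOL_subset: "SOL X F \<subseteq> X"
  by (auto simp: SOL_def)

lemma monotone_op_inner_le:
  assumes "monotone_op X G" "u \<in> X" "v \<in> X"
  shows "G u \<bullet> (v - u) \<le> G v \<bullet> (v - u)"
  using assms by (auto simp: monotone_op_def inner_diff_left)

lemma SOL_eq_Minty: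
  fixes X :: "'a::euclidean_space set"
  assumes X: "convex X" and F: "continuous_on X F" "monotone_op X F"
  shows "SOL X F = X \<inter> (\<Inter>y\<in>X. {x. F y \<bullet> x \<le> F y \<bullet> y})"
proof (intro equalityI subsetI)
  fix x assume "x \<in> SOL X F"
  then have x: "x \<in> X" "\<And>y. y \<in> X \<Longrightarrow> 0 \<le> F x \<bullet> (y - x)" by (auto simp: SOL_def)
  have "F y \<bullet> x \<le> F y \<bullet> y" if "y \<in> X" for y
    using x(2)[OF that] monotone_op_inner_le[OF F(2) x(1) that] by (simp add: inner_diff_right)
  with x show "x \<in> X \<inter> (\<Inter>y\<in>X. {x. F y \<bullet> x \<le> F y \<bullet> y})" by auto
next
  fix x assume "x \<in> X \<inter> (\<Inter>y\<in>X. {x. F y \<bullet> x \<le> F y \<bullet> y})"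
  then have x: "x \<in> X" and Minty: "\<And>y. y \<in> X \<Longrightarrow> 0 \<le> F y \<bullet> (y - x)"
    by (auto simp: inner_diff_right)
  have "0 \<le> F x \<bullet> (z - x)" if z: "z \<in> X" for z
  proof -
    define g where "g t = F (x + t *\<^sub>R (z - x)) \<bullet> (z - x)" for t
    have seg: "x + t *\<^sub>R (z - x) \<in> X" if "t \<in> {0..1}" for t
      using convexD_alt[OF X x z, of t] that by (simp add: algebra_simps)
    have "continuous_on {0..1} g"
      unfolding g_def
      by (intro continuous_intros continuous_on_compose2[OF F(1)]) (auto simp: image_subset_iff seg)
    moreover have "0 \<le> g t" if "t \<in> {0<..1}" for t
    proof -
      have "0 \<le> F (x + t *\<^sub>R (z - x)) \<bullet> (t *\<^sub>R (z - x))"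
        using Minty[OF seg] that by simp
      then show ?thesis using that by (simp add: g_def zero_le_mult_iff)
    qed
    ultimately have "0 \<le> g 0"
      using continuous_ge_on_closure[of "{0<..1}" g 0 0] by simp
    then show ?thesis by (simp add: g_def)
  qed
  with x show "x \<in> SOL X F" by (auto simp: SOL_def)
qed

lemma closed_SOL:
  fixes X :: "'a::euclidean_space set"
  assumes "convex X" "closed X" "continuous_on X F" "monotone_op X F"
  shows "closed (SOL X F)"
  unfolding SOL_eq_Minty[OF assms(1,3,4)]
  by (intro closed_Int closed_INT ballI assms(2)) (simp add: closed_halfspace_le)

lemma convex_SOL:
  fixes X :: "'a::euclidean_space set"
  assumes "convex X" "continuous_on X F" "monotone_op X F"
  shows "convex (SOL X F)"
  unfolding SOL_eq_Minty[OF assms]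
  by (intro convex_Int convex_INT ballI assms(1)) (simp add: convex_halfspace_le)

lemma bdd_above_compact_continuous_image:
  fixes f :: "'a::topological_space \<Rightarrow> real"
  assumes "compact X" "continuous_on X f" "Y \<subseteq> X"
  shows "bdd_above (f ` Y)"
  using compact_continuous_image[OF assms(2,1)] assms(3)
  by (meson bdd_above_mono bounded_imp_bdd_above compact_imp_bounded image_mono)

lemma Gap_le:
  assumes "Y \<noteq> {}" "\<And>y. y \<in> Y \<Longrightarrow> G y \<bullet> (x - y) \<le> B"
  shows "Gap x Y G \<le> B"
  unfolding Gap_def using assms by (intro cSUP_least) auto

lemma inner_le_Gap:
  fixes X :: "'a::euclidean_space set"
  assumes "compact X" "continuous_on X G" "Y \<subseteq> X" "y \<in> Y"
  shows "G y \<bullet> (x - y) \<le> Gap x Y G"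
  unfolding Gap_def
  by (intro cSUP_upper bdd_above_compact_continuous_image[OF assms(1) _ assms(3)]
        continuous_intros assms(2,4))

lemma Gap_nonneg:
  fixes X :: "'a::euclidean_space set"
  assumes "compact X" "continuous_on X G" "x \<in> X"
  shows "0 \<le> Gap x X G"
  using inner_le_Gap[OF assms(1,2) order_refl assms(3), of x] by simp

lemma norm_le_SUP_norm:
  fixes X :: "'a::euclidean_space set"
  assumes "compact X" "continuous_on X H" "Y \<subseteq> X" "y \<in> Y"
  shows "norm (H y) \<le> (SUP v\<in>Y. norm (H v))"
  by (intro cSUP_upper bdd_above_compact_continuous_image[OF assms(1) _ assms(3)]
        continuous_intros assms(2,4))

lemma distset_le:
  assumes "closed S" "s \<in> S"
  shows "distset x S \<le> norm (x - s)"
  using closest_point_le[OF assms, of x] by (simp add: distset_def proj_def dist_norm)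

lemma Gap_ge_neg_distset:
  fixes X :: "'a::euclidean_space set"
  assumes "compact X" "continuous_on X H" "S \<subseteq> X" "closed S" "S \<noteq> {}"
  shows "- (SUP s\<in>S. norm (H s)) * distset v S \<le> Gap v S H"
proof -
  define p where "p = proj S v"
  have "p \<in> S" using proj_in[OF assms(4,5)] by (simp add: p_def)
  have "- ((SUP s\<in>S. norm (H s)) * norm (v - p)) \<le> - (norm (H p) * norm (v - p))"
    using norm_le_SUP_norm[OF assms(1-3) \<open>p \<in> S\<close>] by (simp add: mult_right_mono)
  also have "\<dots> \<le> H p \<bullet> (v - p)"
    using norm_cauchy_schwarz[of "H p" "p - v"] by (simp add: norm_minus_commute inner_diff_right)
  also have "\<dots> \<le> Gap v S H"
    by (rule inner_le_Gap[OF assms(1-3) \<open>p \<in> S\<close>])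
  finally show ?thesis by (simp add: distset_def p_def)
qed

lemma distset_SOL_le_Gap_powr:
  fixes X :: "'a::euclidean_space set"
  assumes sharp: "weakly_sharp X F \<alpha> M"
    and X: "compact X" "continuous_on X F" and S: "closed (SOL X F)" "SOL X F \<noteq> {}"
    and v: "v \<in> X"
  shows "distset v (SOL X F) \<le> ((1 / \<alpha>) * Gap v X F) powr (1 / M)"
proof -
  define p where "p = proj (SOL X F) v"
  have p: "p \<in> SOL X F" using proj_in[OF S] by (simp add: p_def)
  have "\<alpha> > 0" "M \<ge> 1" using sharp by (auto simp: weakly_sharp_def)
  have "\<alpha> * distset v (SOL X F) powr M \<le> F p \<bullet> (v - p)"
    using sharp v p by (auto simp: weakly_sharp_def)
  also have "\<dots> \<le> Gap v X F"
    using inner_le_Gap[OF X order_refl] p SOL_subset by blast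
  finally have "distset v (SOL X F) powr M \<le> (1 / \<alpha>) * Gap v X F"
    using \<open>\<alpha> > 0\<close> by (simp add: field_simps)
  then have "(distset v (SOL X F) powr M) powr (1 / M) \<le> ((1 / \<alpha>) * Gap v X F) powr (1 / M)"
    using \<open>M \<ge> 1\<close> by (intro powr_mono2) auto
  then show ?thesis
    using \<open>M \<ge> 1\<close> by (simp add: powr_powr distset_def)
qed

lemma weakly_sharp_regularized_inner_ge:
  fixes X :: "'a::euclidean_space set"
  assumes sharp: "weakly_sharp X F \<alpha> 1" and mono: "monotone_op X F" "monotone_op X H"
    and xs: "xs \<in> SOL (SOL X F) H" and S: "closed (SOL X F)"
    and v: "v \<in> X" and \<eta>: "0 \<le> \<eta>" "2 * \<eta> * norm (H xs) \<le> \<alpha>"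
  shows "\<alpha> / 2 * distset v (SOL X F) \<le> F v \<bullet> (v - xs) + \<eta> * (H v \<bullet> (v - xs))"
proof -
  define d where "d = distset v (SOL X F)"
  define p where "p = proj (SOL X F) v"
  have xsS: "xs \<in> SOL X F" and xsX: "xs \<in> X" using xs SOL_subset by (auto simp: SOL_def)
  have p: "p \<in> SOL X F" using proj_in[OF S] xsS by (auto simp: p_def)
  have "\<alpha> * d \<le> F xs \<bullet> (v - xs)"
    using sharp v xsS by (simp add: weakly_sharp_def d_def distset_def)
  also have "\<dots> \<le> F v \<bullet> (v - xs)"
    by (rule monotone_op_inner_le[OF mono(1) xsX v])
  finally have F_part: "\<alpha> * d \<le> F v \<bullet> (v - xs)" .
  have "- (norm (H xs) * d) \<le> H xs \<bullet> (v - p)"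
    using norm_cauchy_schwarz[of "H xs" "p - v"]
    by (simp add: d_def distset_def p_def norm_minus_commute inner_diff_right)
  also have "\<dots> \<le> H xs \<bullet> (v - xs)"
    using xs p by (auto simp: SOL_def inner_diff_right)
  also have "\<dots> \<le> H v \<bullet> (v - xs)"
    by (rule monotone_op_inner_le[OF mono(2) xsX v])
  finally have "\<eta> * - (norm (H xs) * d) \<le> \<eta> * (H v \<bullet> (v - xs))"
    using \<open>0 \<le> \<eta>\<close> by (rule mult_left_mono)
  moreover have "\<eta> * norm (H xs) * d \<le> \<alpha> / 2 * d"
    using \<eta>(2) by (intro mult_right_mono) (auto simp: d_def distset_def)
  ultimately show ?thesis
    using F_part by (simp add: d_def)
qed

lemma norm_diff_sq_le_DX2:
  fixes X :: "'a::euclidean_space set"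
  assumes "bounded X" "x \<in> X" "u \<in> X"
  shows "(norm (x - u))\<^sup>2 / 2 \<le> DX2 X"
proof -
  obtain R where R: "\<And>v. v \<in> X \<Longrightarrow> norm v \<le> R" using assms(1) bounded_iff by blast
  have bound: "(1/2) * (norm (a - v))\<^sup>2 \<le> 2 * R\<^sup>2" if "a \<in> X" "v \<in> X" for a v
  proof -
    have "norm (a - v) \<le> 2 * R" using R[OF that(1)] R[OF that(2)] norm_triangle_ineq4[of a v] by linarith
    then have "(norm (a - v))\<^sup>2 \<le> (2 * R)\<^sup>2" by (meson norm_ge_zero power_mono)
    then show ?thesis by (simp add: power_mult_distrib)
  qed
  have "(1/2) * (norm (x - u))\<^sup>2 \<le> (SUP v\<in>X. (1/2) * (norm (x - v))\<^sup>2)"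
    using bound assms(2,3) by (intro cSUP_upper bdd_aboveI2[where M = "2 * R\<^sup>2"]) auto
  also have "\<dots> \<le> DX2 X"
    unfolding DX2_def using bound assms(2)
    by (intro cSUP_upper bdd_aboveI2[where M = "2 * R\<^sup>2"] cSUP_least) auto
  finally show ?thesis by simp
qed

lemma norm_diff_le_DX:
  fixes X :: "'a::euclidean_space set"
  assumes "bounded X" "x \<in> X" "u \<in> X"
  shows "norm (x - u) \<le> sqrt 2 * DX X"
proof -
  have "(norm (x - u))\<^sup>2 \<le> 2 * DX2 X" using norm_diff_sq_le_DX2[OF assms] by simp
  then show ?thesis by (simp add: DX_def real_le_rsqrt flip: real_sqrt_mult)
qed

lemma average_in_convex:
  fixes C :: "'a::real_vector set"
  assumes "convex C" "0 < K" "\<And>k. k < K \<Longrightarrow> p k \<in> C"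
  shows "(1 / real K) *\<^sub>R (\<Sum>k<K. p k) \<in> C"
  using convex_sum[of "{..<K}" C "\<lambda>_. 1 / real K" p] assms by (simp add: scaleR_sum_right)

lemma sum_inner_diff_average:
  fixes c u :: "'a::real_inner"
  assumes "0 < K"
  shows "(\<Sum>k<K. c \<bullet> (p k - u)) = real K * (c \<bullet> ((1 / real K) *\<^sub>R (\<Sum>k<K. p k) - u))"
  using assms by (simp add: inner_diff_right sum_subtractf inner_sum_right algebra_simps)

lemma distset_average_le:
  fixes S :: "'a::euclidean_space set"
  assumes S: "closed S" "convex S" "S \<noteq> {}" and "0 < K"
  shows "distset ((1 / real K) *\<^sub>R (\<Sum>k<K. p k)) S \<le> (1 / real K) * (\<Sum>k<K. distset (p k) S)"
proof -
  define q where "q = (1 / real K) *\<^sub>R (\<Sum>k<K. proj S (p k))"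
  have "q \<in> S" unfolding q_def using assms proj_in by (intro average_in_convex) auto
  then have "distset ((1 / real K) *\<^sub>R (\<Sum>k<K. p k)) S \<le> norm ((1 / real K) *\<^sub>R (\<Sum>k<K. p k) - q)"
    by (rule distset_le[OF S(1)])
  also have "\<dots> = (1 / real K) * norm (\<Sum>k<K. p k - proj S (p k))"
    by (simp add: q_def sum_subtractf flip: scaleR_diff_right)
  also have "\<dots> \<le> (1 / real K) * (\<Sum>k<K. distset (p k) S)"
    unfolding distset_def by (intro mult_left_mono norm_sum) auto
  finally show ?thesis .
qed

lemma weighted_telescope_le:
  fixes a c :: "nat \<Rightarrow> real"
  assumes "\<And>k. 0 \<le> a k" "\<And>k. a k \<le> D" "\<And>k. 0 \<le> c k" "incseq c"
  shows "(\<Sum>k<Suc n. c k * (a k - a (Suc k))) \<le> c n * (D - a (Suc n))"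
proof (induction n)
  case 0
  show ?case using mult_left_mono[OF assms(2)[of 0] assms(3)[of 0]] by (simp add: algebra_simps)
next
  case (Suc n)
  have "c n * (D - a (Suc n)) \<le> c (Suc n) * (D - a (Suc n))"
    using assms(2)[of "Suc n"] incseq_SucD[OF assms(4), of n] by (simp add: mult_right_mono)
  with Suc.IH show ?case by (simp add: algebra_simps)
qed

lemma powr_diff_ge:
  fixes b t :: real
  assumes b: "0 < b" "b < 1" and "0 \<le> t"
  shows "(1 - b) / (t + 1) powr b \<le> (t + 1) powr (1 - b) - t powr (1 - b)"
proof (cases "t = 0")
  case True
  then show ?thesis using b by simp
next
  case False
  define s where "s = t / (t + 1)"
  have "s > 0" using False \<open>0 \<le> t\<close> by (simp add: s_def)
  have Young: "s powr (1 - b) \<le> (1 - b) * s + b"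
    using Youngs_inequality_0[of "1 - b" b s 1] b \<open>s > 0\<close> by simp
  have "t powr (1 - b) = s powr (1 - b) * (t + 1) powr (1 - b)"
    using \<open>0 \<le> t\<close> by (simp add: s_def powr_divide)
  also have "\<dots> \<le> ((1 - b) * s + b) * (t + 1) powr (1 - b)"
    using Young by (simp add: mult_right_mono)
  also have "\<dots> = (t + 1) powr (1 - b) - (1 - b) / (t + 1) powr b"
  proof -
    have "(t + 1) powr (1 - b) = (t + 1) / (t + 1) powr b"
      using \<open>0 \<le> t\<close> by (simp add: powr_diff)
    moreover have "(t + 1) powr b > 0" using \<open>0 \<le> t\<close> by simp
    ultimately show ?thesis
      using \<open>0 \<le> t\<close> by (simp add: s_def field_simps)
  qed
  finally show ?thesis by simp
qed

lemma sum_inverse_powr_le: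
  fixes b :: real
  assumes "0 < b" "b < 1"
  shows "(\<Sum>k<K. 1 / (real k + 1) powr b) \<le> real K powr (1 - b) / (1 - b)"
proof (induction K)
  case (Suc K)
  have "1 / (real K + 1) powr b \<le> ((real K + 1) powr (1 - b) - real K powr (1 - b)) / (1 - b)"
    using powr_diff_ge[OF assms, of "real K"] assms by (simp add: field_simps)
  with Suc.IH show ?case by (simp add: diff_divide_distrib add.commute)
qed simp

locale regularized_extragradient =
  fixes X :: "'a::euclidean_space set" and F H :: "'a \<Rightarrow> 'a"
    and LF LH \<gamma> :: real and \<eta> :: "nat \<Rightarrow> real" and x y ybar :: "nat \<Rightarrow> 'a"
  assumes X_nonempty: "X \<noteq> {}" and closed_X: "closed X" and convex_X: "convex X"
    and bounded_X: "bounded X"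
    and F_lipschitz: "LF-lipschitz_on X F" and F_monotone: "monotone_op X F"
    and H_lipschitz: "LH-lipschitz_on X H" and H_monotone: "monotone_op X H"
    and bilevel_nonempty: "SOL (SOL X F) H \<noteq> {}"
    and \<gamma>_pos: "\<gamma> > 0" and \<eta>_pos: "\<And>k. \<eta> k > 0" and x0_in: "x 0 \<in> X"
    and y_step: "\<And>k. y (Suc k) = proj X (x k - \<gamma> *\<^sub>R (F (x k) + \<eta> k *\<^sub>R H (x k)))"
    and x_step: "\<And>k. x (Suc k) = proj X (x k - \<gamma> *\<^sub>R (F (y (Suc k)) + \<eta> k *\<^sub>R H (y (Suc k))))"
    and ybar_eq: "\<And>K. ybar K = (1 / real K) *\<^sub>R (\<Sum>k<K. y (Suc k))"
    and step_size: "\<gamma>\<^sup>2 * (LF\<^sup>2 + (\<eta> 0)\<^sup>2 * LH\<^sup>2) \<le> 1/2"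
begin

lemma compact_X: "compact X"
  using closed_X bounded_X by (simp add: compact_eq_bounded_closed)

lemma continuous_F: "continuous_on X F"
  using F_lipschitz by (rule lipschitz_on_continuous_on)

lemma continuous_H: "continuous_on X H"
  using H_lipschitz by (rule lipschitz_on_continuous_on)

lemma closed_SOL_X_F: "closed (SOL X F)"
  using convex_X closed_X continuous_F F_monotone by (rule closed_SOL)

lemma convex_SOL_X_F: "convex (SOL X F)"
  using convex_X continuous_F F_monotone by (rule convex_SOL)

lemma SOL_X_F_nonempty: "SOL X F \<noteq> {}"
  using bilevel_nonempty by (auto simp: SOL_def)

lemma x_in: "x k \<in> X"
  by (cases k) (simp_all add: x0_in x_step proj_in closed_X X_nonempty)

lemma y_in: "y (Suc k) \<in> X"
  by (simp add: y_step proj_in closed_X X_nonempty)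

lemma ybar_in: "0 < K \<Longrightarrow> ybar K \<in> X"
  unfolding ybar_eq by (rule average_in_convex[OF convex_X]) (simp_all add: y_in)

lemma sum_inner_ybar: "0 < K \<Longrightarrow> (\<Sum>k<K. c \<bullet> (y (Suc k) - u)) = real K * (c \<bullet> (ybar K - u))"
  unfolding ybar_eq by (rule sum_inner_diff_average)

lemma norm_le_CH: "v \<in> X \<Longrightarrow> norm (H v) \<le> CH X H"
  unfolding CH_def by (rule norm_le_SUP_norm[OF compact_X continuous_H order_refl])

lemma CH_nonneg: "0 \<le> CH X H"
  using norm_le_CH[OF x0_in] by (rule order_trans[OF norm_ge_zero])

lemma DX_nonneg: "0 \<le> DX X"
  using norm_diff_sq_le_DX2[OF bounded_X x0_in x0_in] by (simp add: DX_def)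

lemma BH_nonneg: "0 \<le> BH X F H"
proof -
  obtain s where "s \<in> SOL X F" using SOL_X_F_nonempty by blast
  then show ?thesis
    unfolding BH_def
    using norm_le_SUP_norm[OF compact_X continuous_H SOL_subset] by (meson norm_ge_zero order_trans)
qed

lemma Gap_SOL_ge: "- BH X F H * distset v (SOL X F) \<le> Gap v (SOL X F) H"
  unfolding BH_def
  by (rule Gap_ge_neg_distset[OF compact_X continuous_H SOL_subset closed_SOL_X_F SOL_X_F_nonempty])

lemma step_estimate:
  assumes "\<eta> k \<le> \<eta> 0" and u: "u \<in> X"
  shows "\<gamma> * (F (y (Suc k)) \<bullet> (y (Suc k) - u) + \<eta> k * (H (y (Suc k)) \<bullet> (y (Suc k) - u)))
           \<le> (norm (x k - u))\<^sup>2 / 2 - (norm (x (Suc k) - u))\<^sup>2 / 2"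
proof -
  define G where "G v = F v + \<eta> k *\<^sub>R H v" for v
  define L where "L = LF + \<eta> k * LH"
  have lip: "L-lipschitz_on X G"
    unfolding G_def L_def using \<eta>_pos[of k]
    by (intro lipschitz_on_add lipschitz_on_cmult_nonneg F_lipschitz H_lipschitz) simp
  then have "0 \<le> L" by (rule lipschitz_on_nonneg)
  have "L\<^sup>2 \<le> 2 * (LF\<^sup>2 + (\<eta> k)\<^sup>2 * LH\<^sup>2)"
    using sum_squares_bound[of LF "\<eta> k * LH"] by (simp add: L_def power2_eq_square algebra_simps)
  also have "\<dots> \<le> 2 * (LF\<^sup>2 + (\<eta> 0)\<^sup>2 * LH\<^sup>2)"
    using power_mono[OF assms(1), of 2] \<eta>_pos[of k] by (simp add: mult_right_mono)
  finally have "\<gamma>\<^sup>2 * L\<^sup>2 \<le> \<gamma>\<^sup>2 * (2 * (LF\<^sup>2 + (\<eta> 0)\<^sup>2 * LH\<^sup>2))"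
    by (rule mult_left_mono) simp
  then have "(\<gamma> * L)\<^sup>2 \<le> 1\<^sup>2"
    using step_size by (simp add: power_mult_distrib algebra_simps)
  then have "\<gamma> * L \<le> 1" by (rule power2_le_imp_le) simp
  have "\<gamma> * (G (y (Suc k)) \<bullet> (y (Suc k) - u)) \<le> (norm (x k - u))\<^sup>2 / 2 - (norm (x (Suc k) - u))\<^sup>2 / 2"
    by (rule extragradient_step[OF convex_X closed_X u _ _ lipschitz_on_normD[OF lip y_in x_in]
          \<open>\<gamma> * L \<le> 1\<close> \<open>0 \<le> L\<close> \<gamma>_pos]) (simp_all add: G_def y_step x_step)
  then show ?thesis by (simp add: G_def inner_add_left)
qed

lemma Gap_SOL_H_le:
  assumes "decseq \<eta>"
  shows "Gap (ybar (Suc n)) (SOL X F) H \<le> DX2 X / (\<gamma> * \<eta> n * real (Suc n))"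
proof (rule Gap_le[OF SOL_X_F_nonempty])
  fix u assume u: "u \<in> SOL X F"
  then have "u \<in> X" using SOL_subset by blast
  define a where "a k = (norm (x k - u))\<^sup>2 / 2" for k
  have per_step: "\<gamma> * (H u \<bullet> (y (Suc k) - u)) \<le> (1 / \<eta> k) * (a k - a (Suc k))" for k
  proof -
    have "0 \<le> F u \<bullet> (y (Suc k) - u)" using u y_in by (auto simp: SOL_def)
    also have "\<dots> \<le> F (y (Suc k)) \<bullet> (y (Suc k) - u)"
      by (rule monotone_op_inner_le[OF F_monotone \<open>u \<in> X\<close> y_in])
    finally have "0 \<le> \<gamma> * (F (y (Suc k)) \<bullet> (y (Suc k) - u))" using \<gamma>_pos by simp
    moreover have "\<gamma> * (\<eta> k * (H u \<bullet> (y (Suc k) - u))) \<le> \<gamma> * (\<eta> k * (H (y (Suc k)) \<bullet> (y (Suc k) - u)))"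
      using monotone_op_inner_le[OF H_monotone \<open>u \<in> X\<close> y_in] \<gamma>_pos \<eta>_pos[of k] by simp
    moreover have "\<eta> k \<le> \<eta> 0" using decseqD[OF assms] by simp
    note step_estimate[OF this \<open>u \<in> X\<close>]
    ultimately have "\<eta> k * (\<gamma> * (H u \<bullet> (y (Suc k) - u))) \<le> a k - a (Suc k)"
      by (simp add: a_def distrib_left mult.left_commute)
    then show ?thesis using \<eta>_pos[of k] by (simp add: field_simps)
  qed
  \<comment> \<open>Summation by parts against the increasing weights \<open>1 / \<eta> k\<close>.\<close>
  have "incseq (\<lambda>k. 1 / \<eta> k)"
    unfolding incseq_def using decseqD[OF assms] \<eta>_pos by (simp add: divide_left_mono)
  have "\<gamma> * (\<Sum>k<Suc n. H u \<bullet> (y (Suc k) - u)) \<le> (\<Sum>k<Suc n. (1 / \<eta> k) * (a k - a (Suc k)))"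
    unfolding sum_distrib_left by (rule sum_mono) (rule per_step)
  also have "\<dots> \<le> (1 / \<eta> n) * (DX2 X - a (Suc n))"
    using norm_diff_sq_le_DX2[OF bounded_X x_in \<open>u \<in> X\<close>] \<eta>_pos \<open>incseq _\<close>
    by (intro weighted_telescope_le) (auto simp: a_def less_imp_le)
  also have "\<dots> \<le> DX2 X / \<eta> n"
    using \<eta>_pos[of n] by (simp add: a_def divide_right_mono)
  finally have "\<gamma> * (real (Suc n) * (H u \<bullet> (ybar (Suc n) - u))) \<le> DX2 X / \<eta> n"
    by (simp only: sum_inner_ybar[OF zero_less_Suc])
  then show "H u \<bullet> (ybar (Suc n) - u) \<le> DX2 X / (\<gamma> * \<eta> n * real (Suc n))"
    using \<gamma>_pos \<eta>_pos[of n] by (simp add: pos_le_divide_eq mult_ac del: of_nat_Suc)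
qed

lemma Gap_X_F_le:
  assumes \<eta>_le: "\<And>k. \<eta> k \<le> \<eta> 0" and "0 < K"
  shows "Gap (ybar K) X F \<le> DX2 X / (\<gamma> * real K) + sqrt 2 * CH X H * DX X * (\<Sum>k<K. \<eta> k) / real K"
proof (rule Gap_le[OF X_nonempty])
  fix u assume "u \<in> X"
  define E where "E = sqrt 2 * CH X H * DX X"
  define a where "a k = (norm (x k - u))\<^sup>2 / 2" for k
  have per_step: "\<gamma> * (F u \<bullet> (y (Suc k) - u)) \<le> a k - a (Suc k) + \<gamma> * E * \<eta> k" for k
  proof -
    have "- (H (y (Suc k)) \<bullet> (y (Suc k) - u)) \<le> norm (H (y (Suc k))) * norm (y (Suc k) - u)"
      using norm_cauchy_schwarz[of "H (y (Suc k))" "u - y (Suc k)"]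
      by (simp add: norm_minus_commute inner_diff_right)
    also have "\<dots> \<le> CH X H * (sqrt 2 * DX X)"
      using norm_le_CH[OF y_in] norm_diff_le_DX[OF bounded_X y_in \<open>u \<in> X\<close>] CH_nonneg
      by (intro mult_mono) auto
    also have "\<dots> = E" by (simp add: E_def)
    finally have "\<gamma> * \<eta> k * - (H (y (Suc k)) \<bullet> (y (Suc k) - u)) \<le> \<gamma> * \<eta> k * E"
      using \<gamma>_pos \<eta>_pos[of k] by (intro mult_left_mono) simp_all
    moreover have "\<gamma> * (F u \<bullet> (y (Suc k) - u)) \<le> \<gamma> * (F (y (Suc k)) \<bullet> (y (Suc k) - u))"
      using monotone_op_inner_le[OF F_monotone \<open>u \<in> X\<close> y_in] \<gamma>_pos by simp
    moreover note step_estimate[OF \<eta>_le \<open>u \<in> X\<close>, of k]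
    ultimately show ?thesis by (simp add: a_def algebra_simps)
  qed
  have "\<gamma> * (\<Sum>k<K. F u \<bullet> (y (Suc k) - u)) \<le> (\<Sum>k<K. a k - a (Suc k) + \<gamma> * E * \<eta> k)"
    unfolding sum_distrib_left by (rule sum_mono) (rule per_step)
  also have "\<dots> = a 0 - a K + \<gamma> * E * (\<Sum>k<K. \<eta> k)"
    by (simp only: sum.distrib sum_lessThan_telescope' sum_distrib_left)
  also have "\<dots> \<le> DX2 X + \<gamma> * E * (\<Sum>k<K. \<eta> k)"
    using norm_diff_sq_le_DX2[OF bounded_X x0_in \<open>u \<in> X\<close>] zero_le_power2[of "norm (x K - u)"]
    unfolding a_def by linarith
  finally have "\<gamma> * (real K * (F u \<bullet> (ybar K - u))) \<le> DX2 X + \<gamma> * E * (\<Sum>k<K. \<eta> k)"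
    by (simp only: sum_inner_ybar[OF \<open>0 < K\<close>])
  then show "F u \<bullet> (ybar K - u) \<le> DX2 X / (\<gamma> * real K) + E * (\<Sum>k<K. \<eta> k) / real K"
    using \<gamma>_pos \<open>0 < K\<close> by (simp add: field_simps)
qed

lemma distset_ybar_le_constant:
  assumes sharp: "weakly_sharp X F \<alpha> 1" and xs: "xs \<in> SOL (SOL X F) H"
    and const: "\<And>k. \<eta> k = \<eta> 0" and small: "2 * \<eta> 0 * norm (H xs) \<le> \<alpha>" and "0 < K"
  shows "distset (ybar K) (SOL X F) \<le> (norm (x 0 - xs))\<^sup>2 / (\<gamma> * \<alpha>) * (1 / real K)"
proof -
  have "\<alpha> > 0" using sharp by (simp add: weakly_sharp_def)
  have "xs \<in> X" using xs SOL_subset by (auto simp: SOL_def)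
  define d where "d k = distset (y (Suc k)) (SOL X F)" for k
  define a where "a k = (norm (x k - xs))\<^sup>2 / 2" for k
  have per_step: "\<gamma> * (\<alpha> / 2) * d k \<le> a k - a (Suc k)" for k
  proof -
    have "\<alpha> / 2 * d k \<le> F (y (Suc k)) \<bullet> (y (Suc k) - xs) + \<eta> k * (H (y (Suc k)) \<bullet> (y (Suc k) - xs))"
      using weakly_sharp_regularized_inner_ge[OF sharp F_monotone H_monotone xs closed_SOL_X_F y_in,
          of "\<eta> 0"] \<eta>_pos[of 0] small const[of k]
      by (simp add: d_def)
    then have "\<gamma> * (\<alpha> / 2) * d k
        \<le> \<gamma> * (F (y (Suc k)) \<bullet> (y (Suc k) - xs) + \<eta> k * (H (y (Suc k)) \<bullet> (y (Suc k) - xs)))"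
      using \<gamma>_pos by (simp add: mult.assoc)
    also have "\<dots> \<le> a k - a (Suc k)"
      using step_estimate[OF _ \<open>xs \<in> X\<close>, of k] const[of k] by (simp add: a_def)
    finally show ?thesis .
  qed
  have "\<gamma> * (\<alpha> / 2) * (\<Sum>k<K. d k) \<le> (\<Sum>k<K. a k - a (Suc k))"
    unfolding sum_distrib_left by (rule sum_mono) (rule per_step)
  also have "\<dots> \<le> (norm (x 0 - xs))\<^sup>2 / 2"
    unfolding sum_lessThan_telescope' by (simp add: a_def)
  finally have sum_d: "(\<Sum>k<K. d k) \<le> (norm (x 0 - xs))\<^sup>2 / (\<gamma> * \<alpha>)"
    using \<gamma>_pos \<open>\<alpha> > 0\<close> by (simp add: field_simps)
  have "distset (ybar K) (SOL X F) \<le> (1 / real K) * (\<Sum>k<K. d k)"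
    unfolding ybar_eq d_def
    by (rule distset_average_le[OF closed_SOL_X_F convex_SOL_X_F SOL_X_F_nonempty \<open>0 < K\<close>])
  also have "\<dots> \<le> (1 / real K) * ((norm (x 0 - xs))\<^sup>2 / (\<gamma> * \<alpha>))"
    by (rule mult_left_mono[OF sum_d]) simp
  finally show ?thesis by (simp add: mult.commute)
qed

lemma diminishing_decseq:
  assumes "0 < b" and \<eta>_eq: "\<And>k. \<eta> k = \<eta> 0 / (real k + 1) powr b"
  shows "decseq \<eta>"
proof (rule decseq_SucI)
  fix k
  have "(real k + 1) powr b \<le> (real (Suc k) + 1) powr b" using \<open>0 < b\<close> by (intro powr_mono2) auto
  then show "\<eta> (Suc k) \<le> \<eta> k"
    unfolding \<eta>_eq[of k] \<eta>_eq[of "Suc k"] using \<eta>_pos[of 0] by (intro divide_left_mono) auto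
qed

lemma Gap_SOL_H_le_diminishing:
  assumes "0 < b" and \<eta>_eq: "\<And>k. \<eta> k = \<eta> 0 / (real k + 1) powr b" and "0 < K"
  shows "Gap (ybar K) (SOL X F) H \<le> DX2 X / (\<gamma> * \<eta> 0) * (1 / real K powr (1 - b))"
proof -
  obtain n where n: "K = Suc n" using \<open>0 < K\<close> gr0_implies_Suc by blast
  have "Gap (ybar K) (SOL X F) H \<le> DX2 X / (\<gamma> * \<eta> n * real K)"
    unfolding n by (rule Gap_SOL_H_le[OF diminishing_decseq[OF assms(1,2)]])
  also have "\<eta> n = \<eta> 0 / real K powr b"
    using \<eta>_eq[of n] by (simp add: n add.commute)
  also have "DX2 X / (\<gamma> * (\<eta> 0 / real K powr b) * real K) = DX2 X / (\<gamma> * \<eta> 0) * (1 / real K powr (1 - b))"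
    using \<open>0 < K\<close> by (simp add: powr_diff)
  finally show ?thesis .
qed

lemma Gap_X_F_le_diminishing:
  assumes b: "0 < b" "b < 1" and \<eta>_eq: "\<And>k. \<eta> k = \<eta> 0 / (real k + 1) powr b" and "0 < K"
  shows "Gap (ybar K) X F
           \<le> DX2 X / \<gamma> * (1 / real K) + sqrt 2 * \<eta> 0 * CH X H * DX X / (1 - b) * (1 / real K powr b)"
proof -
  define E where "E = sqrt 2 * CH X H * DX X"
  have "0 \<le> E" using CH_nonneg DX_nonneg by (simp add: E_def)
  have "\<eta> k = \<eta> 0 * (1 / (real k + 1) powr b)" for k
    using \<eta>_eq[of k] by simp
  then have "(\<Sum>k<K. \<eta> k) = \<eta> 0 * (\<Sum>k<K. 1 / (real k + 1) powr b)"
    unfolding sum_distrib_left by (rule sum.cong[OF refl])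
  also have "\<dots> \<le> \<eta> 0 * (real K powr (1 - b) / (1 - b))"
    using sum_inverse_powr_le[OF b] \<eta>_pos[of 0] by (intro mult_left_mono) simp_all
  also have "\<dots> = \<eta> 0 * real K / ((1 - b) * real K powr b)"
    using \<open>0 < K\<close> by (simp add: powr_diff)
  finally have "E * (\<Sum>k<K. \<eta> k) / real K \<le> E * (\<eta> 0 * real K / ((1 - b) * real K powr b)) / real K"
    using \<open>0 \<le> E\<close> by (intro divide_right_mono mult_left_mono) simp_all
  also have "\<dots> = sqrt 2 * \<eta> 0 * CH X H * DX X / (1 - b) * (1 / real K powr b)"
    using \<open>0 < K\<close> by (simp add: E_def)
  finally show ?thesis
    using Gap_X_F_le[OF decseqD[OF diminishing_decseq[OF b(1) \<eta>_eq]] \<open>0 < K\<close>]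
    by (simp add: E_def)
qed

lemma Gap_SOL_H_ge_sharp:
  assumes sharp: "weakly_sharp X F \<alpha> M" and "0 < K" and upper: "Gap (ybar K) X F \<le> B"
  shows "- BH X F H * ((1 / \<alpha>) * B) powr (1 / M) \<le> Gap (ybar K) (SOL X F) H"
proof -
  have "\<alpha> > 0" "M \<ge> 1" using sharp by (auto simp: weakly_sharp_def)
  have "0 \<le> Gap (ybar K) X F"
    by (rule Gap_nonneg[OF compact_X continuous_F ybar_in[OF \<open>0 < K\<close>]])
  have "distset (ybar K) (SOL X F) \<le> ((1 / \<alpha>) * Gap (ybar K) X F) powr (1 / M)"
    by (rule distset_SOL_le_Gap_powr[OF sharp compact_X continuous_F closed_SOL_X_F SOL_X_F_nonempty
          ybar_in[OF \<open>0 < K\<close>]])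
  also have "\<dots> \<le> ((1 / \<alpha>) * B) powr (1 / M)"
    using upper \<open>0 \<le> Gap (ybar K) X F\<close> \<open>\<alpha> > 0\<close> \<open>M \<ge> 1\<close>
    by (intro powr_mono2 mult_left_mono) simp_all
  finally have "- BH X F H * ((1 / \<alpha>) * B) powr (1 / M) \<le> - BH X F H * distset (ybar K) (SOL X F)"
    using BH_nonneg by (simp add: mult_left_mono)
  then show ?thesis using Gap_SOL_ge by (rule order_trans)
qed

lemma diminishing_regularization:
  assumes b: "0 < b" "b < 1" and \<eta>_eq: "\<And>k. \<eta> k = \<eta> 0 / (real k + 1) powr b"
    and K: "real K \<ge> 2 powr (1 / (1 - b))"
  shows "(- BH X F H * distset (ybar K) (SOL X F) \<le> Gap (ybar K) (SOL X F) H
          \<and> Gap (ybar K) (SOL X F) H \<le> DX2 X / (\<gamma> * \<eta> 0) * (1 / real K powr (1 - b)))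
       \<and> (0 \<le> Gap (ybar K) X F
          \<and> Gap (ybar K) X F \<le> DX2 X / \<gamma> * (1 / real K)
               + sqrt 2 * \<eta> 0 * CH X H * DX X / (1 - b) * (1 / real K powr b))
       \<and> (\<forall>\<alpha> M. weakly_sharp X F \<alpha> M \<longrightarrow>
          Gap (ybar K) (SOL X F) H \<ge> - BH X F H *
            ((1 / \<alpha>) * (DX2 X / \<gamma> * (1 / real K)
               + sqrt 2 * CH X H * DX X * \<eta> 0 / (1 - b) * (1 / real K powr b))) powr (1 / M))"
proof -
  have "1 \<le> 2 powr (1 / (1 - b))" using b by (intro ge_one_powr_ge_zero) auto
  \<comment> \<open>The hypothesis on \<open>K\<close> is only needed in the form \<open>K \<ge> 1\<close>.\<close>
  then have "real K \<ge> 1" using K by linarith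
  then have "0 < K" by simp
  note F_upper = Gap_X_F_le_diminishing[OF b \<eta>_eq \<open>0 < K\<close>]
  then have "Gap (ybar K) X F
      \<le> DX2 X / \<gamma> * (1 / real K) + sqrt 2 * CH X H * DX X * \<eta> 0 / (1 - b) * (1 / real K powr b)"
    by (simp add: ac_simps)
  note H_lower_sharp = Gap_SOL_H_ge_sharp[OF _ \<open>0 < K\<close> this]
  show ?thesis
    using Gap_SOL_ge Gap_SOL_H_le_diminishing[OF b(1) \<eta>_eq \<open>0 < K\<close>]
      Gap_nonneg[OF compact_X continuous_F ybar_in[OF \<open>0 < K\<close>]] F_upper H_lower_sharp
    by blast
qed

lemma constant_regularization:
  assumes sharp: "weakly_sharp X F \<alpha> 1" and xs: "xs \<in> SOL (SOL X F) H"
    and const: "\<And>k. \<eta> k = \<eta> 0" and small: "2 * \<eta> 0 * norm (H xs) \<le> \<alpha>" and "1 \<le> K"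
  shows "distset (ybar K) (SOL X F) \<le> (norm (x 0 - xs))\<^sup>2 / (\<gamma> * \<alpha>) * (1 / real K)
       \<and> \<bar>Gap (ybar K) (SOL X F) H\<bar> \<le>
           max (DX2 X / (\<gamma> * \<eta> 0)) (BH X F H * (norm (x 0 - xs))\<^sup>2 / (\<gamma> * \<alpha>)) * (1 / real K)"
proof -
  obtain n where n: "K = Suc n" using \<open>1 \<le> K\<close> by (cases K) auto
  define P where "P = DX2 X / (\<gamma> * \<eta> 0)"
  define Q where "Q = BH X F H * (norm (x 0 - xs))\<^sup>2 / (\<gamma> * \<alpha>)"
  have dist: "distset (ybar K) (SOL X F) \<le> (norm (x 0 - xs))\<^sup>2 / (\<gamma> * \<alpha>) * (1 / real K)"
    using distset_ybar_le_constant[OF sharp xs const small] \<open>1 \<le> K\<close> by simp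
  have "decseq \<eta>" by (rule decseq_SucI) (metis const order_refl)
  have "Gap (ybar K) (SOL X F) H \<le> P * (1 / real K)"
    using Gap_SOL_H_le[OF \<open>decseq \<eta>\<close>, of n] const[of n] by (simp add: P_def n)
  also have "\<dots> \<le> max P Q * (1 / real K)" by (intro mult_right_mono) simp_all
  finally have upper: "Gap (ybar K) (SOL X F) H \<le> max P Q * (1 / real K)" .
  have "- (max P Q * (1 / real K)) \<le> - (Q * (1 / real K))"
    by (subst neg_le_iff_le) (intro mult_right_mono, simp_all)
  also have "\<dots> \<le> - BH X F H * distset (ybar K) (SOL X F)"
    using mult_left_mono[OF dist BH_nonneg] by (simp add: Q_def)
  also have "\<dots> \<le> Gap (ybar K) (SOL X F) H" by (rule Gap_SOL_ge)
  finally show ?thesis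
    using dist upper unfolding P_def Q_def abs_le_iff by simp
qed

end

theorem theorem3p5:
  fixes X :: "'a::euclidean_space set" and F H :: "'a \<Rightarrow> 'a"
    and LF LH \<gamma> :: real and \<eta> :: "nat \<Rightarrow> real" and x y :: "nat \<Rightarrow> 'a"
    and ybar :: "nat \<Rightarrow> 'a"
  assumes X: "X \<noteq> {}" "closed X" "convex X" "bounded X"
    and F: "LF-lipschitz_on X F" "monotone_op X F"
    and H: "LH-lipschitz_on X H" "monotone_op X H"
    and bil: "SOL (SOL X F) H \<noteq> {}"
    and gam: "\<gamma> > 0"
    and eta_pos: "\<And>k. \<eta> k > 0"
    and x0: "x 0 \<in> X"
    and ystep: "\<And>k. y (Suc k) = proj X (x k - \<gamma> *\<^sub>R (F (x k) + \<eta> k *\<^sub>R H (x k)))"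
    and xstep: "\<And>k. x (Suc k) = proj X (x k - \<gamma> *\<^sub>R (F (y (Suc k)) + \<eta> k *\<^sub>R H (y (Suc k))))"
    and ybar: "\<And>K. ybar K = (1 / real K) *\<^sub>R (\<Sum>k<K. y (Suc k))"
    and step: "\<gamma>\<^sup>2 * (LF\<^sup>2 + (\<eta> 0)\<^sup>2 * LH\<^sup>2) \<le> 1/2"
  shows
   "(\<forall>b. 0 < b \<and> b < 1 \<and> (\<forall>k. \<eta> k = \<eta> 0 / (real k + 1) powr b) \<longrightarrow>
      (\<forall>K::nat. real K \<ge> 2 powr (1 / (1 - b)) \<longrightarrow>
         (- BH X F H * distset (ybar K) (SOL X F) \<le> Gap (ybar K) (SOL X F) H
          \<and> Gap (ybar K) (SOL X F) H \<le> DX2 X / (\<gamma> * \<eta> 0) * (1 / real K powr (1 - b)))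
       \<and> (0 \<le> Gap (ybar K) X F
          \<and> Gap (ybar K) X F \<le> DX2 X / \<gamma> * (1 / real K)
               + sqrt 2 * \<eta> 0 * CH X H * DX X / (1 - b) * (1 / real K powr b))
       \<and> (\<forall>\<alpha> M. weakly_sharp X F \<alpha> M \<longrightarrow>
          Gap (ybar K) (SOL X F) H \<ge> - BH X F H *
            ((1 / \<alpha>) * (DX2 X / \<gamma> * (1 / real K)
               + sqrt 2 * CH X H * DX X * \<eta> 0 / (1 - b) * (1 / real K powr b))) powr (1 / M))))
    \<and>
    (\<forall>\<alpha> xs. weakly_sharp X F \<alpha> 1 \<and> xs \<in> SOL (SOL X F) H \<and> (\<forall>k. \<eta> k = \<eta> 0)
        \<and> 2 * \<eta> 0 * norm (H xs) \<le> \<alpha> \<longrightarrow>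
      (\<forall>K::nat. K \<ge> 1 \<longrightarrow>
         distset (ybar K) (SOL X F) \<le> (norm (x 0 - xs))\<^sup>2 / (\<gamma> * \<alpha>) * (1 / real K)
       \<and> \<bar>Gap (ybar K) (SOL X F) H\<bar> \<le>
           max (DX2 X / (\<gamma> * \<eta> 0)) (BH X F H * (norm (x 0 - xs))\<^sup>2 / (\<gamma> * \<alpha>)) * (1 / real K)))"
proof -
  interpret regularized_extragradient X F H LF LH \<gamma> \<eta> x y ybar
    using assms by unfold_locales
  show ?thesis
    by (rule conjI; intro allI impI; elim conjE)
      (rule diminishing_regularization constant_regularization; blast)+
qed

end
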